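(* Let $M$ be a monoid of binary relations on a finite set $Q$ and let $e\in M$ be an idempotent. Let $\sigma\neq\tau$ be two distinct strongly connected components of the restriction of $e$ to its set of fixed points, and let $s\in\sigma$, $t\in\tau$. If $(s,t)\in e$, then for every $m\in H(e)$ we have $(t,s)\notin m$, and $(\sigma,\tau)\notin\gamma_e(m)$.
   Context: Monoid of relations: set of relations on $Q$ containing the identity and closed under composition $mn=\{(p,q)\mid\exists r,(p,r)\in m,(r,q)\in n\}$. Fixed point of $e$: $q$ with $(q,q)\in e$. $H(e)$ is the $\mathcal H$-class of $e$ in $M$, a group with identity $e$; $m^{-1}$ is the inverse in this group. For $m\in H(e)$, $\gamma_e(m)$ is the relation on the set $\Gamma$ of strongly connected components of fixed points of $e$ given by $(\rho,\sigma)\in\gamma_e(m)$ iff $(r,s)\in m$ and $(s,r)\in m^{-1}$ for some $r\in\rho$, $s\in\sigma$. *)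

theory Defs
  imports Main
begin

definition rel_monoid :: "'a set \<Rightarrow> ('a \<times> 'a) set set \<Rightarrow> bool" where
  "rel_monoid Q M \<longleftrightarrow> (\<forall>m\<in>M. m \<subseteq> Q \<times> Q) \<and> Id_on Q \<in> M \<and>
     (\<forall>m\<in>M. \<forall>n\<in>M. m O n \<in> M)"

definition fixpts :: "('a \<times> 'a) set \<Rightarrow> 'a set" where
  "fixpts e = {q. (q, q) \<in> e}"

definition fix_restr :: "('a \<times> 'a) set \<Rightarrow> ('a \<times> 'a) set" where
  "fix_restr e = e \<inter> (fixpts e \<times> fixpts e)"

definition scc_of :: "('a \<times> 'a) set \<Rightarrow> 'a \<Rightarrow> 'a set" where
  "scc_of e p = {q \<in> fixpts e. (p, q) \<in> (fix_restr e)\<^sup>* \<and> (q, p) \<in> (fix_restr e)\<^sup>*}"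

definition sccs :: "('a \<times> 'a) set \<Rightarrow> 'a set set" where
  "sccs e = scc_of e ` fixpts e"

text \<open>Green's H-class of e in the monoid M (M^1 = M since M is a monoid).\<close>
definition Hclass :: "('a \<times> 'a) set set \<Rightarrow> ('a \<times> 'a) set \<Rightarrow> ('a \<times> 'a) set set" where
  "Hclass M e = {m \<in> M. (\<lambda>x. m O x) ` M = (\<lambda>x. e O x) ` M \<and>
                         (\<lambda>x. x O m) ` M = (\<lambda>x. x O e) ` M}"

definition Hinv :: "('a \<times> 'a) set set \<Rightarrow> ('a \<times> 'a) set \<Rightarrow> ('a \<times> 'a) set \<Rightarrow> ('a \<times> 'a) set" where
  "Hinv M e m = (THE n. n \<in> Hclass M e \<and> m O n = e \<and> n O m = e)"

definition gamma :: "('a \<times> 'a) set set \<Rightarrow> ('a \<times> 'a) set \<Rightarrow> ('a \<times> 'a) set \<Rightarrow> ('a set \<times> 'a set) set" where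
  "gamma M e m = {(\<rho>, \<sigma>). \<rho> \<in> sccs e \<and> \<sigma> \<in> sccs e \<and>
      (\<exists>r\<in>\<rho>. \<exists>s\<in>\<sigma>. (r, s) \<in> m \<and> (s, r) \<in> Hinv M e m)}"

end

theory Submission
  imports Defs
begin

text \<open>Every element h of the finite group H(e) satisfies h^d = e for some d \<ge> 1: left
cancellation by an inverse makes the sequence h^j e purely periodic. If e has an edge s \<rightarrow> t
and h an edge t \<rightarrow> s, then h = e h has the loop s \<rightarrow> s, so t \<rightarrow> s is an edge of every positive
power of h, in particular of e; thus s and t lie in one strongly connected component. For
r \<in> \<sigma> and u \<in> \<tau>, the path r \<rightarrow> s \<rightarrow> t \<rightarrow> u gives (r, u) \<in> e, so the same argument applied to the
inverse of m, which lies in H(e), excludes (u, r) from it.\<close>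

lemma rel_monoid_closed: "rel_monoid Q M \<Longrightarrow> a \<in> M \<Longrightarrow> b \<in> M \<Longrightarrow> a O b \<in> M"
  unfolding rel_monoid_def by blast

lemma rel_monoid_finite: "finite Q \<Longrightarrow> rel_monoid Q M \<Longrightarrow> finite M"
  unfolding rel_monoid_def by (metis Pow_iff finite_Pow_iff finite_SigmaI finite_subset subsetI)

lemma Hclass_iff:
  assumes "rel_monoid Q M" "e \<in> M" "e O e = e"
  shows "h \<in> Hclass M e \<longleftrightarrow>
    h \<in> M \<and> e O h = h \<and> h O e = h \<and> (\<exists>a\<in>M. a O h = e) \<and> (\<exists>b\<in>M. h O b = e)"
proof
  assume h: "h \<in> Hclass M e"
  then have hM: "h \<in> M" and
    L: "(\<lambda>x. h O x) ` M = (\<lambda>x. e O x) ` M" and R: "(\<lambda>x. x O h) ` M = (\<lambda>x. x O e) ` M"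
    unfolding Hclass_def by auto
  have IdM: "Id_on Q \<in> M" and "h \<subseteq> Q \<times> Q" "e \<subseteq> Q \<times> Q"
    using assms(1,2) hM unfolding rel_monoid_def by auto
  then have unit: "h O Id_on Q = h" "Id_on Q O h = h" "e O Id_on Q = e" "Id_on Q O e = e"
    by auto
  have "h \<in> (\<lambda>x. h O x) ` M" "h \<in> (\<lambda>x. x O h) ` M"
    using IdM unit(1,2) by (auto intro!: image_eqI[of _ _ "Id_on Q"])
  then have "h \<in> (\<lambda>x. e O x) ` M" "h \<in> (\<lambda>x. x O e) ` M"
    using L R by simp_all
  then obtain x y where x: "h = e O x" and y: "h = y O e"
    by blast
  have "e O h = h"
    unfolding x by (simp add: assms(3) flip: O_assoc)
  moreover have "h O e = h"
    unfolding y by (simp add: assms(3) O_assoc)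
  moreover have "e \<in> (\<lambda>x. e O x) ` M" "e \<in> (\<lambda>x. x O e) ` M"
    using IdM unit(3,4) by (auto intro!: image_eqI[of _ _ "Id_on Q"])
  then have "\<exists>a\<in>M. a O h = e" "\<exists>b\<in>M. h O b = e"
    using L R by (metis imageE)+
  ultimately show "h \<in> M \<and> e O h = h \<and> h O e = h \<and> (\<exists>a\<in>M. a O h = e) \<and> (\<exists>b\<in>M. h O b = e)"
    using hM by blast
next
  assume "h \<in> M \<and> e O h = h \<and> h O e = h \<and> (\<exists>a\<in>M. a O h = e) \<and> (\<exists>b\<in>M. h O b = e)"
  then obtain a b where h: "h \<in> M" "e O h = h" "h O e = h" "a \<in> M" "a O h = e" "b \<in> M" "h O b = e"
    by blast
  note closed = rel_monoid_closed[OF assms(1)]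
  have "(\<lambda>x. h O x) ` M = (\<lambda>x. e O x) ` M"
  proof (intro equalityI image_subsetI)
    fix x assume x: "x \<in> M"
    have "h O x = e O (h O x)" by (simp add: h(2) O_assoc[symmetric])
    then show "h O x \<in> (\<lambda>x. e O x) ` M" using closed[OF h(1) x] by blast
    have "e O x = h O (b O x)" by (simp add: h(7) O_assoc[symmetric])
    then show "e O x \<in> (\<lambda>x. h O x) ` M" using closed[OF h(6) x] by blast
  qed
  moreover have "(\<lambda>x. x O h) ` M = (\<lambda>x. x O e) ` M"
  proof (intro equalityI image_subsetI)
    fix x assume x: "x \<in> M"
    have "x O h = (x O h) O e" by (simp add: h(3) O_assoc)
    then show "x O h \<in> (\<lambda>x. x O e) ` M" using closed[OF x h(1)] by blast
    have "x O e = (x O a) O h" by (simp add: h(5) O_assoc)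
    then show "x O e \<in> (\<lambda>x. x O h) ` M" using closed[OF x h(4)] by blast
  qed
  ultimately show "h \<in> Hclass M e"
    unfolding Hclass_def using h(1) by blast
qed

lemma periodic_if_finite_range_cancellative:
  fixes P :: "nat \<Rightarrow> 'b"
  assumes "finite (range P)" and cancel: "\<And>i j. P (Suc i) = P (Suc j) \<Longrightarrow> P i = P j"
  shows "\<exists>d\<ge>1. P d = P 0"
proof -
  obtain i j where "i < j" "P i = P j"
    using assms(1) finite_imageD[of P UNIV] unfolding inj_def by (metis infinite_UNIV_nat linorder_neqE_nat)
  have "P 0 = P (j - i)" if "P k = P (k + (j - i))" for k
    using that by (induction k) (auto intro: cancel)
  with \<open>i < j\<close> \<open>P i = P j\<close> show ?thesis
    by (metis le_add_diff_inverse less_imp_le_nat less_one not_less zero_less_diff)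
qed

lemma relpow_relcomp_in_rel_monoid:
  "rel_monoid Q M \<Longrightarrow> h \<in> M \<Longrightarrow> e \<in> M \<Longrightarrow> h ^^ j O e \<in> M"
proof (induction j arbitrary: e)
  case (Suc j)
  then show ?case
    using rel_monoid_closed by (metis relpow.simps(2))
qed simp

lemma relpow_relcomp_right_unit:
  fixes h e :: "'a rel"
  shows "h O e = h \<Longrightarrow> 0 < d \<Longrightarrow> h ^^ d O e = h ^^ d"
  by (cases d) (simp_all add: O_assoc)

lemma Hclass_ex_relpow_eq:
  assumes "finite Q" "rel_monoid Q M" "e \<in> M" "e O e = e" "h \<in> Hclass M e"
  shows "\<exists>d\<ge>1. h ^^ d = e"
proof -
  from assms(5) obtain a where h: "h \<in> M" "e O h = h" "h O e = h" and a: "a \<in> M" "a O h = e"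
    unfolding Hclass_iff[OF assms(2-4)] by blast
  define P where "P j = h ^^ j O e" for j
  have P_Suc: "P (Suc j) = h O P j" for j
    unfolding P_def by (metis O_assoc relpow.simps(2) relpow_commute)
  have eP: "e O P j = P j" for j
  proof (induction j)
    case 0
    then show ?case by (simp add: P_def assms(4))
  next
    case (Suc j)
    then show ?case by (simp add: P_Suc h(2) flip: O_assoc)
  qed
  have cancel: "P i = P j" if "P (Suc i) = P (Suc j)" for i j
  proof -
    have "a O P (Suc i) = a O P (Suc j)" using that by simp
    then show ?thesis by (simp add: P_Suc a(2) eP flip: O_assoc)
  qed
  have "finite (range P)"
  proof (rule finite_subset)
    show "range P \<subseteq> M"
      using relpow_relcomp_in_rel_monoid[OF assms(2) h(1) assms(3)] by (auto simp: P_def)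
  qed (rule rel_monoid_finite[OF assms(1,2)])
  then obtain d where "d \<ge> 1" "P d = P 0"
    using periodic_if_finite_range_cancellative cancel by blast
  then have "h ^^ d = e"
    using relpow_relcomp_right_unit[OF h(3), of d] by (simp add: P_def assms(4))
  with \<open>d \<ge> 1\<close> show ?thesis by blast
qed

lemma Hinv_in_Hclass:
  assumes "finite Q" "rel_monoid Q M" "e \<in> M" "e O e = e" "m \<in> Hclass M e"
  shows "Hinv M e m \<in> Hclass M e"
proof -
  from assms(5) have m: "m \<in> M" "e O m = m" "m O e = m"
    unfolding Hclass_iff[OF assms(2-4)] by blast+
  obtain d where d: "d \<ge> 1" "m ^^ d = e"
    using Hclass_ex_relpow_eq[OF assms] by blast
  define k where "k = m ^^ (d - 1) O e"
  have "Suc (d - 1) = d" using d(1) by simp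
  then have km: "k O m = e" and mk: "m O k = e"
    unfolding k_def using d(2) assms(4)
    by (metis O_assoc m(2) relpow.simps(2), metis O_assoc relpow.simps(2) relpow_commute)
  have ke: "k O e = k"
    unfolding k_def by (simp add: O_assoc assms(4))
  then have ek: "e O k = k"
    by (metis O_assoc km mk)
  have "k \<in> M"
    unfolding k_def by (rule relpow_relcomp_in_rel_monoid[OF assms(2) m(1) assms(3)])
  then have k_Hclass: "k \<in> Hclass M e"
    unfolding Hclass_iff[OF assms(2-4)] using m(1) km mk ke ek by blast
  have "Hinv M e m = k"
    unfolding Hinv_def
  proof (rule the_equality)
    show "k \<in> Hclass M e \<and> m O k = e \<and> k O m = e" using k_Hclass km mk by blast
    fix n assume n: "n \<in> Hclass M e \<and> m O n = e \<and> n O m = e"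
    then have "n O e = n" unfolding Hclass_iff[OF assms(2-4)] by blast
    then show "n = k" using n mk ek by (metis O_assoc)
  qed
  with k_Hclass show ?thesis by simp
qed

lemma Hclass_return_edge_in_idem:
  assumes "finite Q" "rel_monoid Q M" "e \<in> M" "e O e = e" "h \<in> Hclass M e"
    and "(s, t) \<in> e" "(t, s) \<in> h"
  shows "(t, s) \<in> e"
proof -
  from assms(5) have "e O h = h" unfolding Hclass_iff[OF assms(2-4)] by blast
  then have loop: "(s, s) \<in> h" using assms(6,7) by blast
  obtain d where d: "d \<ge> 1" "h ^^ d = e" using Hclass_ex_relpow_eq[OF assms(1-5)] by blast
  have "(t, s) \<in> h ^^ Suc k" for k
    by (induction k) (use assms(7) loop in \<open>auto intro: relpow_Suc_I\<close>)
  from this[of "d - 1"] d show ?thesis by simp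
qed

lemma sccs_subset_fixpts: "\<sigma> \<in> sccs e \<Longrightarrow> x \<in> \<sigma> \<Longrightarrow> x \<in> fixpts e"
  unfolding sccs_def scc_of_def by auto

lemma sccs_strongly_connected:
  "\<sigma> \<in> sccs e \<Longrightarrow> x \<in> \<sigma> \<Longrightarrow> y \<in> \<sigma> \<Longrightarrow> (x, y) \<in> (fix_restr e)\<^sup>*"
  unfolding sccs_def scc_of_def by (auto intro: rtrancl_trans)

lemma sccs_eqI:
  assumes "\<sigma> \<in> sccs e" "\<tau> \<in> sccs e" "x \<in> \<sigma>" "y \<in> \<tau>"
    and "(x, y) \<in> (fix_restr e)\<^sup>*" "(y, x) \<in> (fix_restr e)\<^sup>*"
  shows "\<sigma> = \<tau>"
proof -
  obtain p q where p: "\<sigma> = scc_of e p" and q: "\<tau> = scc_of e q"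
    using assms(1,2) unfolding sccs_def by blast
  have "(p, x) \<in> (fix_restr e)\<^sup>*" "(x, p) \<in> (fix_restr e)\<^sup>*"
    "(q, y) \<in> (fix_restr e)\<^sup>*" "(y, q) \<in> (fix_restr e)\<^sup>*"
    using assms(3,4) unfolding p q scc_of_def by auto
  then have "(p, q) \<in> (fix_restr e)\<^sup>*" "(q, p) \<in> (fix_restr e)\<^sup>*"
    using assms(5,6) by (meson rtrancl_trans)+
  then show ?thesis
    unfolding p q scc_of_def by (auto intro: rtrancl_trans)
qed

lemma fix_restr_rtrancl_in_idem:
  assumes "(x, y) \<in> (fix_restr e)\<^sup>*" "x \<in> fixpts e" "e O e = e"
  shows "(x, y) \<in> e"
  using assms(1)
proof (induction rule: rtrancl_induct)
  case base
  then show ?case using assms(2) unfolding fixpts_def by simp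
next
  case (step y z)
  then have "(x, z) \<in> e O e" unfolding fix_restr_def by blast
  then show ?case using assms(3) by simp
qed

lemma Hclass_no_return_edge:
  assumes "finite Q" "rel_monoid Q M" "e \<in> M" "e O e = e" "h \<in> Hclass M e"
    and "\<sigma> \<in> sccs e" "\<tau> \<in> sccs e" "\<sigma> \<noteq> \<tau>" "r \<in> \<sigma>" "u \<in> \<tau>" "(r, u) \<in> e"
  shows "(u, r) \<notin> h"
proof
  assume "(u, r) \<in> h"
  then have ur: "(u, r) \<in> e"
    by (rule Hclass_return_edge_in_idem[OF assms(1-5,11)])
  have "r \<in> fixpts e" "u \<in> fixpts e"
    using sccs_subset_fixpts[OF assms(6,9)] sccs_subset_fixpts[OF assms(7,10)] .
  then have "(r, u) \<in> fix_restr e" "(u, r) \<in> fix_restr e"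
    using assms(11) ur unfolding fix_restr_def by blast+
  then have "\<sigma> = \<tau>"
    by (intro sccs_eqI[OF assms(6,7,9,10)] r_into_rtrancl)
  with assms(8) show False by contradiction
qed

theorem mainTheorem8:
  fixes Q :: "'a set" and M :: "('a \<times> 'a) set set" and e m :: "('a \<times> 'a) set"
    and \<sigma> \<tau> :: "'a set" and s t :: 'a
  assumes "finite Q" and "rel_monoid Q M"
    and "e \<in> M" and "e O e = e"
    and "\<sigma> \<in> sccs e" and "\<tau> \<in> sccs e" and "\<sigma> \<noteq> \<tau>"
    and "s \<in> \<sigma>" and "t \<in> \<tau>" and "(s, t) \<in> e"
    and "m \<in> Hclass M e"
  shows "(t, s) \<notin> m \<and> (\<sigma>, \<tau>) \<notin> gamma M e m"
proof
  show "(t, s) \<notin> m"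
    by (rule Hclass_no_return_edge[OF assms(1-4,11,5-10)])
  show "(\<sigma>, \<tau>) \<notin> gamma M e m"
  proof
    assume "(\<sigma>, \<tau>) \<in> gamma M e m"
    then obtain r u where ru: "r \<in> \<sigma>" "u \<in> \<tau>" and ur: "(u, r) \<in> Hinv M e m"
      unfolding gamma_def by blast
    have "(s, t) \<in> fix_restr e"
      using assms(10) sccs_subset_fixpts[OF assms(5,8)] sccs_subset_fixpts[OF assms(6,9)]
      unfolding fix_restr_def by blast
    then have "(r, u) \<in> (fix_restr e)\<^sup>*"
      using sccs_strongly_connected[OF assms(5) ru(1) assms(8)]
        sccs_strongly_connected[OF assms(6,9) ru(2)] by (meson rtrancl_trans r_into_rtrancl)
    then have "(r, u) \<in> e"
      by (rule fix_restr_rtrancl_in_idem[OF _ sccs_subset_fixpts[OF assms(5) ru(1)] assms(4)])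
    then have "(u, r) \<notin> Hinv M e m"
      by (rule Hclass_no_return_edge[OF assms(1-4) Hinv_in_Hclass[OF assms(1-4,11)] assms(5-7) ru])
    with ur show False by contradiction
  qed
qed

end
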